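(* $\mathrm{rk}(|\Phi^3\rangle)=7$, where $|\Phi^3\rangle=|\Phi\rangle_{AB}|\Phi\rangle_{AC}|\Phi\rangle_{BC}$ with $|\Phi\rangle=|00\rangle+|11\rangle$, viewed as a tripartite tensor in $(\mathbb{C}^2\otimes\mathbb{C}^2)_A\otimes(\mathbb{C}^2\otimes\mathbb{C}^2)_B\otimes(\mathbb{C}^2\otimes\mathbb{C}^2)_C$ (party $A$ holds one qubit of the $AB$ pair and one of the $AC$ pair, and similarly for $B$ and $C$).
   Context: The tensor rank $\mathrm{rk}(|\phi\rangle)$ of $|\phi\rangle\in H_A\otimes H_B\otimes H_C$ is the minimum $r$ such that $|\phi\rangle=\sum_{j=1}^r|a_j\rangle|b_j\rangle|c_j\rangle$ with $|a_j\rangle\in H_A,|b_j\rangle\in H_B,|c_j\rangle\in H_C$. *)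

theory Defs
  imports Complex_Main
begin

text \<open>Tripartite tensors in H_A \<otimes> H_B \<otimes> H_C are represented by their coefficient
  functions with respect to fixed bases indexed by types 'a, 'b, 'c.\<close>

definition tensor_rank :: "('a \<Rightarrow> 'b \<Rightarrow> 'c \<Rightarrow> complex) \<Rightarrow> nat" where
  "tensor_rank T = (LEAST r. \<exists>(a :: nat \<Rightarrow> 'a \<Rightarrow> complex) (b :: nat \<Rightarrow> 'b \<Rightarrow> complex)
       (c :: nat \<Rightarrow> 'c \<Rightarrow> complex).
       T = (\<lambda>i j k. \<Sum>l<r. a l i * b l j * c l k))"

text \<open>Unnormalized EPR pair |00> + |11> on C^2 \<otimes> C^2, basis of C^2 indexed by bool.\<close>
definition Phi :: "bool \<Rightarrow> bool \<Rightarrow> complex" where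
  "Phi x y = (if x = y then 1 else 0)"

definition Phi3 :: "bool \<times> bool \<Rightarrow> bool \<times> bool \<Rightarrow> bool \<times> bool \<Rightarrow> complex" where
  "Phi3 = (\<lambda>(a1, a2) (b1, b2) (c1, c2). Phi a1 b1 * Phi a2 c1 * Phi b2 c2)"

end

theory Submission
  imports Defs "HOL-Analysis.Analysis"
begin

text \<open>Contracting the shared EPR pairs shows that \<open>Phi3\<close> is the structure tensor of 2\<times>2
  matrix multiplication (with the first factor transposed), so its rank is the bilinear complexity
  of 2\<times>2 matrix multiplication.  Strassen's algorithm gives rank at most 7.

  For the lower bound suppose \<open>X V = \<Sum>l<6. \<alpha>_l(X) \<beta>_l(V) C_l\<close>.  Taking \<open>V = 1\<close> shows that the
  forms \<open>\<alpha>_l\<close> span the dual space, so four of them form a basis.  Its dual basis contains two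
  vectors spanning a pencil \<open>\<langle>U0, U1\<rangle>\<close> with \<open>U0\<close> invertible, on which the other two basis forms
  \<open>\<alpha>_i, \<alpha>_j\<close> vanish.  On the pencil only four products survive, so in the basis
  \<open>N_k = U0\<inverse> C_k\<close> left multiplication by \<open>U0\<inverse> U1\<close> is diagonal.  For the dual vector \<open>M\<close> of
  \<open>\<alpha>_i\<close>, left multiplication by \<open>U0\<inverse> M\<close> is diagonal up to the rank-one term of product \<open>i\<close>,
  and a 2\<times>2 computation forces \<open>U0\<inverse> M\<close> into the span of \<open>1\<close> and \<open>U0\<inverse> U1\<close>.  Hence \<open>M\<close> lies
  in the pencil, contradicting \<open>\<alpha>_i(M) = 1\<close>.\<close>

lemma sum_delta_smult:
  fixes F :: "'k::finite \<Rightarrow> 'a::comm_ring_1^'n"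
  shows "(\<Sum>k\<in>UNIV. (if k = k' then c else 0) *s F k) = c *s F k'"
proof -
  have "(\<Sum>k\<in>UNIV. (if k = k' then c else 0) *s F k) = (\<Sum>k\<in>UNIV. if k = k' then c *s F k else 0)"
    by (rule sum.cong) auto
  then show ?thesis by (simp add: sum.delta')
qed

section \<open>2\<times>2 matrices\<close>

text \<open>A 2\<times>2 matrix is a vector indexed by (row, column); the same type serves as the space of
  linear forms on matrices via \<open>pairing\<close>.\<close>

type_synonym idx2 = "bool \<times> bool"
type_synonym mat2 = "complex^idx2"

lemma UNIV_idx2: "(UNIV :: idx2 set) = {(False,False),(False,True),(True,False),(True,True)}"
  by (auto simp: UNIV_bool)

lemma card_UNIV_idx2: "CARD(idx2) = 4"
  by (simp add: UNIV_idx2)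

lemma sum_UNIV_idx2:
  "(\<Sum>p\<in>(UNIV::idx2 set). f p) = f (False,False) + f (False,True) + f (True,False) + f (True,True)"
  by (simp add: UNIV_idx2 add.assoc)

lemma mat2_eq_iff:
  "(X::mat2) = Y \<longleftrightarrow> X$(False,False) = Y$(False,False) \<and> X$(False,True) = Y$(False,True)
     \<and> X$(True,False) = Y$(True,False) \<and> X$(True,True) = Y$(True,True)"
  by (auto simp: vec_eq_iff UNIV_idx2) (metis (full_types) prod.collapse)

definition pairing :: "mat2 \<Rightarrow> mat2 \<Rightarrow> complex" where
  "pairing f X = (\<Sum>p\<in>UNIV. f$p * X$p)"

definition m2_mult :: "mat2 \<Rightarrow> mat2 \<Rightarrow> mat2" where
  "m2_mult X Y = (\<chi> p. X$(fst p,False) * Y$(False,snd p) + X$(fst p,True) * Y$(True,snd p))"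

definition m2_one :: mat2 where
  "m2_one = (\<chi> p. if fst p = snd p then 1 else 0)"

definition m2_diag :: "(bool \<Rightarrow> complex) \<Rightarrow> mat2" where
  "m2_diag d = (\<chi> p. if fst p = snd p then d (fst p) else 0)"

definition m2_det :: "mat2 \<Rightarrow> complex" where
  "m2_det X = X$(False,False) * X$(True,True) - X$(False,True) * X$(True,False)"

definition m2_det_polar :: "mat2 \<Rightarrow> mat2 \<Rightarrow> complex" where
  "m2_det_polar X Y = X$(False,False) * Y$(True,True) + X$(True,True) * Y$(False,False)
     - X$(False,True) * Y$(True,False) - X$(True,False) * Y$(False,True)"

definition m2_inv :: "mat2 \<Rightarrow> mat2" where
  "m2_inv X = (\<chi> p. (if p = (False,False) then X$(True,True) else if p = (True,True) then X$(False,False)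
     else - X$p) / m2_det X)"

lemma pairing_expand:
  "pairing f X = f$(False,False) * X$(False,False) + f$(False,True) * X$(False,True)
     + f$(True,False) * X$(True,False) + f$(True,True) * X$(True,True)"
  by (simp add: pairing_def sum_UNIV_idx2)

lemma pairing_add: "pairing f (X + Y) = pairing f X + pairing f Y"
  and pairing_smult: "pairing f (c *s X) = c * pairing f X"
  and pairing_smult_left: "pairing (c *s f) X = c * pairing f X"
  and pairing_zero [simp]: "pairing f 0 = 0"
  by (simp_all add: pairing_expand algebra_simps)

lemma axis_component: "axis i x $ j = (if j = i then x else 0)"
  by (simp add: axis_def)

lemma pairing_axis: "pairing f (axis p 1) = f $ p"
  by (simp add: pairing_def axis_def if_distrib cong: if_cong)

lemma m2_mult_component: "m2_mult X Y $ (i,j) = X$(i,False) * Y$(False,j) + X$(i,True) * Y$(True,j)"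
  by (simp add: m2_mult_def)

lemma m2_mult_component_split: "m2_mult X Y $ (i,j) = X$(i,r) * Y$(r,j) + X$(i,\<not> r) * Y$(\<not> r,j)"
  by (cases r) (simp_all add: m2_mult_component)

lemma m2_mult_assoc: "m2_mult (m2_mult X Y) Z = m2_mult X (m2_mult Y Z)"
  by (simp add: mat2_eq_iff m2_mult_component algebra_simps)

lemma m2_mult_one_left [simp]: "m2_mult m2_one X = X"
  and m2_mult_one_right [simp]: "m2_mult X m2_one = X"
  by (simp_all add: mat2_eq_iff m2_mult_component m2_one_def)

lemma m2_mult_add_left: "m2_mult (X + Y) Z = m2_mult X Z + m2_mult Y Z"
  and m2_mult_add_right: "m2_mult X (Y + Z) = m2_mult X Y + m2_mult X Z"
  and m2_mult_diff_right: "m2_mult X (Y - Z) = m2_mult X Y - m2_mult X Z"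
  and m2_mult_smult_left: "m2_mult (c *s X) Y = c *s m2_mult X Y"
  and m2_mult_smult_right: "m2_mult X (c *s Y) = c *s m2_mult X Y"
  by (simp_all add: mat2_eq_iff m2_mult_component algebra_simps)

lemma m2_mult_sum_smult: "m2_mult X (\<Sum>k\<in>S. c k *s F k) = (\<Sum>k\<in>S. c k *s m2_mult X (F k))"
  by (induction S rule: infinite_finite_induct)
     (simp_all add: m2_mult_add_right m2_mult_smult_right mat2_eq_iff m2_mult_component)

lemma m2_mult_inv: "m2_det X \<noteq> 0 \<Longrightarrow> m2_mult X (m2_inv X) = m2_one"
  and m2_inv_mult: "m2_det X \<noteq> 0 \<Longrightarrow> m2_mult (m2_inv X) X = m2_one"
  by (simp_all add: mat2_eq_iff m2_mult_component m2_one_def m2_inv_def field_simps)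
     (simp_all add: m2_det_def algebra_simps)

lemma m2_det_add: "m2_det (X + Y) = m2_det X + m2_det Y + m2_det_polar X Y"
  by (simp add: m2_det_def m2_det_polar_def algebra_simps)

lemma m2_det_polar_self: "m2_det_polar X X = 2 * m2_det X"
  by (simp add: m2_det_def m2_det_polar_def algebra_simps)

lemma m2_det_polar_one: "m2_det_polar m2_one m2_one = 2"
  by (simp add: m2_det_polar_def m2_one_def)

lemma m2_det_polar_sum_left:
  "m2_det_polar (\<Sum>k\<in>S. c k *s F k) Y = (\<Sum>k\<in>S. c k * m2_det_polar (F k) Y)"
  and m2_det_polar_sum_right:
  "m2_det_polar Y (\<Sum>k\<in>S. c k *s F k) = (\<Sum>k\<in>S. c k * m2_det_polar Y (F k))"
  by (induction S rule: infinite_finite_induct) (auto simp: m2_det_polar_def algebra_simps)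

section \<open>Dual bases of the space of 2\<times>2 matrices\<close>

lemma expansion_coordinates:
  fixes f N :: "'k \<Rightarrow> mat2"
  assumes E: "\<And>V. V = (\<Sum>k\<in>S. pairing (f k) V *s N k)"
  shows "(\<Sum>k\<in>S. f k $ q * N k $ p) = (if p = q then 1 else 0)"
  using arg_cong[OF E[of "axis q 1"], of "\<lambda>X. X $ p"]
  by (simp only: sum_component vector_smult_component pairing_axis axis_component)

text \<open>Four terms expanding every matrix must form a basis, so \<open>f\<close> is its dual basis.\<close>

lemma expansion_biorthogonal:
  fixes f N :: "idx2 \<Rightarrow> mat2"
  assumes E: "\<And>V. V = (\<Sum>k\<in>UNIV. pairing (f k) V *s N k)"
  shows "pairing (f k) (N k') = (if k = k' then 1 else 0)"
proof -
  define Fm :: "complex^idx2^idx2" where "Fm = (\<chi> k. f k)"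
  define Nm :: "complex^idx2^idx2" where "Nm = (\<chi> p. \<chi> k. N k $ p)"
  have "(Nm ** Fm) $ p $ p' = mat 1 $ p $ p'" for p p'
    using expansion_coordinates[OF E, where q = p' and p = p]
    by (simp add: matrix_matrix_mult_def Nm_def Fm_def mat_def mult.commute)
  then have "Fm ** Nm = mat 1"
    using matrix_left_right_inverse by (metis vec_eq_iff)
  then have "(Fm ** Nm) $ k $ k' = mat 1 $ k $ k'" by simp
  then show ?thesis
    by (simp add: matrix_matrix_mult_def Nm_def Fm_def mat_def pairing_def)
qed

lemma expansion_forms_span:
  fixes A N :: "nat \<Rightarrow> mat2"
  assumes E: "\<And>X. X = (\<Sum>l<n. pairing (A l) X *s N l)"
  shows "vec.span (A ` {..<n}) = UNIV"
proof -
  note coord = expansion_coordinates[OF E]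
  have "axis p 1 = (\<Sum>l<n. (N l $ p) *s A l)" for p
    unfolding vec_eq_iff sum_component vector_smult_component axis_component
    using coord by (simp add: mult.commute)
  then have "axis p 1 \<in> vec.span (A ` {..<n})" for p
    by (metis (no_types, lifting) image_eqI lessThan_iff vec.span_base vec.span_scale vec.span_sum)
  then have "(\<Sum>p\<in>UNIV. (w$p) *s axis p 1) \<in> vec.span (A ` {..<n})" for w
    by (intro vec.span_sum vec.span_scale) auto
  then show ?thesis
    by (auto simp: basis_expansion)
qed

lemma spanning_forms_dual_basis:
  fixes A N :: "nat \<Rightarrow> mat2"
  assumes E: "\<And>X. X = (\<Sum>l<n. pairing (A l) X *s N l)"
  obtains g :: "idx2 \<Rightarrow> nat" and u :: "idx2 \<Rightarrow> mat2"
  where "inj g" "\<And>k. g k < n"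
    "\<And>k k'. pairing (A (g k)) (u k') = (if k = k' then 1 else 0)"
    "\<And>w. w = (\<Sum>k\<in>UNIV. pairing (A (g k)) w *s u k)"
proof -
  note sp = expansion_forms_span[OF E]
  obtain B where B: "B \<subseteq> A ` {..<n}" "vec.independent B" "A ` {..<n} \<subseteq> vec.span B"
    using vec.maximal_independent_subset by blast
  have spB: "vec.span B = UNIV"
    using B(3) sp by (metis top.extremum_uniqueI vec.span_minimal vec.subspace_span)
  have "finite B" using B(1) finite_subset by blast
  moreover have "card B = CARD(idx2)"
    using vec.basis_card_eq_dim[of B UNIV] B(2) spB by (simp add: card_cart_basis)
  ultimately obtain h where h: "bij_betw h (UNIV::idx2 set) B"
    using finite_same_card_bij[of "UNIV::idx2 set" B] by auto
  define Rm :: "complex^idx2^idx2" where "Rm = (\<chi> k. h k)"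
  have "rows Rm = B"
    using h by (auto simp: rows_def row_def Rm_def bij_betw_def)
  then obtain X :: "complex^idx2^idx2" where "X ** Rm = mat 1"
    using matrix_left_invertible_span_rows_gen[of Rm] spB by auto
  then have X: "Rm ** X = mat 1" using matrix_left_right_inverse by blast
  define u where "u k = column k X" for k
  have du: "pairing (h k) (u k') = (if k = k' then 1 else 0)" for k k'
    using arg_cong[OF X, of "\<lambda>Y. Y $ k $ k'"]
    by (simp add: matrix_matrix_mult_def Rm_def mat_def pairing_def u_def column_def)
  have ex: "w = (\<Sum>k\<in>UNIV. pairing (h k) w *s u k)" for w
  proof -
    have "w = X *v (Rm *v w)" by (simp add: matrix_vector_mul_assoc \<open>X ** Rm = mat 1\<close>)
    also have "Rm *v w = (\<chi> k. pairing (h k) w)"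
      by (simp add: vec_eq_iff matrix_vector_mult_def Rm_def pairing_def)
    finally show ?thesis by (simp add: matrix_mult_sum u_def)
  qed
  have "\<exists>l. l < n \<and> A l = h k" for k
  proof -
    have "h k \<in> A ` {..<n}" using h B(1) by (auto simp: bij_betw_def)
    then show ?thesis by auto
  qed
  then obtain g where g: "\<And>k. g k < n \<and> A (g k) = h k" by metis
  have "inj g"
  proof
    fix k k' assume "g k = g k'"
    then have "h k = h k'" using g by metis
    then show "k = k'" using h by (metis bij_betw_imp_inj_on inj_onD UNIV_I)
  qed
  show thesis
    by (rule that[of g u]) (use g du ex \<open>inj g\<close> in simp_all)
qed

lemma sum_mult_sum_minor:
  fixes a b d e :: "'a \<Rightarrow> complex"
  shows "(\<Sum>k\<in>S. d k * a k) * (\<Sum>k\<in>S. e k * b k) - (\<Sum>k\<in>S. d k * b k) * (\<Sum>k\<in>S. e k * a k)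
   = (\<Sum>k\<in>S. \<Sum>k'\<in>S. d k * e k' * (a k * b k' - b k * a k'))"
proof -
  have "(\<Sum>k\<in>S. d k * a k) * (\<Sum>k\<in>S. e k * b k) = (\<Sum>k\<in>S. \<Sum>k'\<in>S. d k * e k' * (a k * b k'))"
    and "(\<Sum>k\<in>S. d k * b k) * (\<Sum>k\<in>S. e k * a k) = (\<Sum>k\<in>S. \<Sum>k'\<in>S. d k * e k' * (b k * a k'))"
    unfolding sum_product by (simp_all add: algebra_simps)
  then show ?thesis by (simp add: sum_subtractf[symmetric] right_diff_distrib)
qed

lemma expansion_row_minor_nonzero:
  fixes N f :: "idx2 \<Rightarrow> mat2"
  assumes E: "\<And>V. V = (\<Sum>k\<in>UNIV. pairing (f k) V *s N k)"
  obtains k k' where "N k $ (r,False) * N k' $ (r,True) - N k $ (r,True) * N k' $ (r,False) \<noteq> 0"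
proof (rule ccontr)
  assume "\<not> thesis"
  then have minor: "N k $ (r,False) * N k' $ (r,True) - N k $ (r,True) * N k' $ (r,False) = 0" for k k'
    using that by blast
  note coord = expansion_coordinates[OF E]
  have "(\<Sum>k\<in>UNIV. f k $ (r,False) * N k $ (r,False)) * (\<Sum>k\<in>UNIV. f k $ (r,True) * N k $ (r,True))
       - (\<Sum>k\<in>UNIV. f k $ (r,False) * N k $ (r,True)) * (\<Sum>k\<in>UNIV. f k $ (r,True) * N k $ (r,False))
     = 0"
    by (simp only: sum_mult_sum_minor minor mult_zero_right sum.neutral_const)
  then show False by (simp add: coord)
qed

section \<open>Operators diagonal up to a rank-one term\<close>

lemma eigenvectors_independent:
  fixes xa xb ya yb ma mb pa pb pc pd :: complex
  assumes "pa*xa + pb*xb = ma*xa" "pc*xa + pd*xb = ma*xb"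
    and "pa*ya + pb*yb = mb*ya" "pc*ya + pd*yb = mb*yb"
    and "ma \<noteq> mb" "xa \<noteq> 0 \<or> xb \<noteq> 0" "ya \<noteq> 0 \<or> yb \<noteq> 0"
  shows "xa*yb - xb*ya \<noteq> 0"
proof
  assume d: "xa*yb - xb*ya = 0"
  have "(mb - ma) * (xa*ya) = xa * (pa*ya + pb*yb) - ya * (pa*xa + pb*xb)"
    using assms(1,3) by (simp add: algebra_simps)
  also have "\<dots> = pb * (xa*yb - xb*ya)" by (simp add: algebra_simps)
  also have "\<dots> = 0" using d by simp
  finally have 1: "(mb - ma) * (xa*ya) = 0" .
  have "(mb - ma) * (xb*yb) = xb * (pc*ya + pd*yb) - yb * (pc*xa + pd*xb)"
    using assms(2,4) by (simp add: algebra_simps)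
  also have "\<dots> = - pc * (xa*yb - xb*ya)" by (simp add: algebra_simps)
  also have "\<dots> = 0" using d by simp
  finally have 2: "(mb - ma) * (xb*yb) = 0" .
  have "(mb - ma) * (xa*yb) = xa * (pc*ya + pd*yb) - ya * (pc*xa + pd*xb) + ma * (xb*ya - xa*yb)"
    using assms(2,4) by (simp add: algebra_simps)
  also have "\<dots> = (pd - ma) * (xa*yb - xb*ya)" by (simp add: algebra_simps)
  also have "\<dots> = 0" using d by simp
  finally have 3: "(mb - ma) * (xa*yb) = 0" .
  have "mb - ma \<noteq> 0" using assms(5) by simp
  with 1 2 3 have "xa*ya = 0" "xb*yb = 0" "xa*yb = 0" by simp_all
  then show False using assms(6,7) d by auto
qed

lemma m2_mult_diag_component: "m2_mult (m2_diag d) X $ (r,c) = d r * X $ (r,c)"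
  by (cases r) (simp_all add: m2_mult_component m2_diag_def)

lemma offdiag_zero_if_diagonal_mod_rank_one:
  fixes N f :: "idx2 \<Rightarrow> mat2" and Q R :: mat2 and \<mu> \<kappa> \<rho> :: "idx2 \<Rightarrow> complex"
  assumes E: "\<And>V. V = (\<Sum>k\<in>UNIV. pairing (f k) V *s N k)"
    and eigen: "\<And>k. m2_mult (m2_diag d) (N k) = \<mu> k *s N k"
    and rank_one: "\<And>k. m2_mult Q (N k) - \<kappa> k *s N k = \<rho> k *s R"
    and d: "d False \<noteq> d True"
  shows "Q $ (\<not> r, r) = 0"
proof -
  have d': "d (\<not> r) \<noteq> d r" using d by (cases r) auto
  have eig: "d s * N k $ (s,c) = \<mu> k * N k $ (s,c)" for k s c
    using arg_cong[OF eigen[of k], of "\<lambda>X. X $ (s,c)"] by (simp add: m2_mult_diag_component)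
  obtain k k' where minor: "N k $ (r,False) * N k' $ (r,True) - N k $ (r,True) * N k' $ (r,False) \<noteq> 0"
    using expansion_row_minor_nonzero[OF E] by blast
  have row_nonzero: "\<exists>c'. N j $ (r,c') \<noteq> 0" if "j = k \<or> j = k'" for j
  proof (rule ccontr)
    assume "\<not> ?thesis"
    then show False using minor that by auto
  qed
  have row: "Q$(\<not> r, r) * N j $ (r,c) = \<rho> j * R $ (\<not> r,c)" if j: "j = k \<or> j = k'" for j c
  proof -
    obtain c' where "N j $ (r,c') \<noteq> 0" using row_nonzero[OF j] by blast
    then have "\<mu> j = d r" using eig[of r j c'] by simp
    then have "N j $ (\<not> r, c) = 0" using eig[of "\<not> r" j c] d' by simp
    moreover have "Q$(\<not> r, r) * N j $ (r,c) + Q$(\<not> r, \<not> r) * N j $ (\<not> r,c) - \<kappa> j * N j $ (\<not> r,c)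
        = \<rho> j * R $ (\<not> r,c)"
      using arg_cong[OF rank_one[of j], of "\<lambda>X. X $ (\<not> r,c)"]
      by (simp only: vector_minus_component vector_smult_component m2_mult_component_split[of _ _ _ _ r])
    ultimately show ?thesis by simp
  qed
  have "Q$(\<not> r, r)^2 * (N k $ (r,False) * N k' $ (r,True) - N k $ (r,True) * N k' $ (r,False))
     = (Q$(\<not> r, r) * N k $ (r,False)) * (Q$(\<not> r, r) * N k' $ (r,True))
       - (Q$(\<not> r, r) * N k $ (r,True)) * (Q$(\<not> r, r) * N k' $ (r,False))"
    by (simp add: power2_eq_square algebra_simps)
  also have "\<dots> = 0" by (simp add: row)
  finally show ?thesis using minor by simp
qed

lemma diag_in_span_one_diag:
  assumes "X $ (False,True) = 0" "X $ (True,False) = 0" "e False \<noteq> e True"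
  shows "\<exists>s t. X = s *s m2_one + t *s m2_diag e"
proof -
  define t where "t = (X$(False,False) - X$(True,True)) / (e False - e True)"
  have "t * (e False - e True) = X$(False,False) - X$(True,True)"
    using assms(3) by (simp add: t_def)
  then have "X$(True,True) = X$(False,False) - t * (e False - e True)" by simp
  then have "X = (X$(False,False) - t * e False) *s m2_one + t *s m2_diag e"
    using assms(1,2) by (simp add: mat2_eq_iff m2_one_def m2_diag_def algebra_simps)
  then show ?thesis by blast
qed

lemma diagonal_mod_rank_one_in_span_diag:
  fixes N f :: "idx2 \<Rightarrow> mat2" and Q R :: mat2 and \<mu> \<kappa> \<rho> :: "idx2 \<Rightarrow> complex"
  assumes E: "\<And>V. V = (\<Sum>k\<in>UNIV. pairing (f k) V *s N k)"
    and eigen: "\<And>k. m2_mult (m2_diag e) (N k) = \<mu> k *s N k"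
    and rank_one: "\<And>k. m2_mult Q (N k) - \<kappa> k *s N k = \<rho> k *s R"
    and e: "e False \<noteq> e True"
  shows "\<exists>s t. Q = s *s m2_one + t *s m2_diag e"
  using offdiag_zero_if_diagonal_mod_rank_one[OF assms, of False]
    offdiag_zero_if_diagonal_mod_rank_one[OF assms, of True]
  by (intro diag_in_span_one_diag e) simp_all

lemma eigenvalues_not_constant:
  fixes N f :: "idx2 \<Rightarrow> mat2" and \<mu> :: "idx2 \<Rightarrow> complex"
  assumes E: "\<And>V. V = (\<Sum>k\<in>UNIV. pairing (f k) V *s N k)"
    and eigen: "\<And>k. m2_mult P (N k) = \<mu> k *s N k"
    and not_scalar: "\<And>c. P \<noteq> c *s m2_one"
  obtains a b where "\<mu> a \<noteq> \<mu> b"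
proof -
  have "\<exists>a b. \<mu> a \<noteq> \<mu> b"
  proof (rule ccontr)
    assume "\<not> ?thesis"
    then obtain m :: complex where \<mu>: "\<And>k. \<mu> k = m" by blast
    have "m2_mult P V = m *s V" for V
    proof -
      have "m2_mult P V = (\<Sum>k\<in>UNIV. pairing (f k) V *s m2_mult P (N k))"
        by (subst E[of V]) (rule m2_mult_sum_smult)
      also have "\<dots> = m *s (\<Sum>k\<in>UNIV. pairing (f k) V *s N k)"
        by (simp add: eigen \<mu> sum_cmul[symmetric] vector_smult_assoc mult.commute)
      finally show ?thesis using E[of V] by simp
    qed
    then show False using not_scalar m2_mult_one_right[of P] by metis
  qed
  then show thesis using that by blast
qed

lemma eigenbasis_diagonalizes:
  fixes N f :: "idx2 \<Rightarrow> mat2" and \<mu> :: "idx2 \<Rightarrow> complex"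
  assumes E: "\<And>V. V = (\<Sum>k\<in>UNIV. pairing (f k) V *s N k)"
    and nonzero: "\<And>k. N k \<noteq> 0"
    and eigen: "\<And>k. m2_mult P (N k) = \<mu> k *s N k"
    and not_scalar: "\<And>c. P \<noteq> c *s m2_one"
  obtains S e where "m2_det S \<noteq> 0" "e False \<noteq> e True" "m2_mult P S = m2_mult S (m2_diag e)"
proof -
  obtain a b where ab: "\<mu> a \<noteq> \<mu> b"
    using eigenvalues_not_constant[OF E eigen not_scalar] by blast
  have "\<exists>c. N k $ (False,c) \<noteq> 0 \<or> N k $ (True,c) \<noteq> 0" for k
    using nonzero[of k] by (auto simp: mat2_eq_iff)
  then obtain col where col: "\<And>k. N k $ (False, col k) \<noteq> 0 \<or> N k $ (True, col k) \<noteq> 0" by metis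
  have eig: "P$(r,False) * N k $ (False,c) + P$(r,True) * N k $ (True,c) = \<mu> k * N k $ (r,c)" for k r c
    using arg_cong[OF eigen[of k], of "\<lambda>X. X $ (r,c)"] by (simp add: m2_mult_component)
  define w where "w s = (if s then b else a)" for s
  define S :: mat2 where "S = (\<chi> p. N (w (snd p)) $ (fst p, col (w (snd p))))"
  have "N a $ (False, col a) * N b $ (True, col b) - N a $ (True, col a) * N b $ (False, col b) \<noteq> 0"
    using eig[where k=a and c="col a"] eig[where k=b and c="col b"] ab col
    by (intro eigenvectors_independent[where pa="P$(False,False)" and pb="P$(False,True)"
          and pc="P$(True,False)" and pd="P$(True,True)" and ma="\<mu> a" and mb="\<mu> b"]) auto
  then have "m2_det S \<noteq> 0" by (simp add: m2_det_def S_def w_def mult.commute)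
  moreover have "m2_mult P S = m2_mult S (m2_diag (\<mu> \<circ> w))"
    by (simp add: mat2_eq_iff m2_mult_component S_def m2_diag_def eig mult.commute)
  moreover have "(\<mu> \<circ> w) False \<noteq> (\<mu> \<circ> w) True" using ab by (simp add: w_def)
  ultimately show thesis using that by blast
qed

lemma diagonal_mod_rank_one_in_span:
  fixes N f :: "idx2 \<Rightarrow> mat2" and \<mu> \<kappa> \<rho> :: "idx2 \<Rightarrow> complex"
  assumes E: "\<And>V. V = (\<Sum>k\<in>UNIV. pairing (f k) V *s N k)"
    and nonzero: "\<And>k. N k \<noteq> 0"
    and eigen: "\<And>k. m2_mult P (N k) = \<mu> k *s N k"
    and rank_one: "\<And>k. m2_mult Q (N k) - \<kappa> k *s N k = \<rho> k *s R"
    and not_scalar: "\<And>c. P \<noteq> c *s m2_one"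
  shows "\<exists>s t. Q = s *s m2_one + t *s P"
proof -
  obtain S e where S: "m2_det S \<noteq> 0" and e: "e False \<noteq> e True"
    and PS: "m2_mult P S = m2_mult S (m2_diag e)"
    using eigenbasis_diagonalizes[OF E nonzero eigen not_scalar] by blast
  define Si where "Si = m2_inv S"
  have SiS: "m2_mult Si S = m2_one" and SSi: "m2_mult S Si = m2_one"
    using S by (simp_all add: Si_def m2_inv_mult m2_mult_inv)
  have SSi': "m2_mult S (m2_mult Si X) = X" for X
    by (simp add: m2_mult_assoc[symmetric] SSi)
  have conj: "m2_mult S (m2_mult (m2_mult Si (m2_mult X S)) Si) = X" for X
    by (simp add: m2_mult_assoc[symmetric] SSi) (simp add: m2_mult_assoc SSi)
  have diag: "m2_diag e = m2_mult Si (m2_mult P S)"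
    by (simp add: PS m2_mult_assoc[symmetric] SiS)
  define f' where "f' k = (\<chi> p. S$(False,fst p) * f k $(False,snd p) + S$(True,fst p) * f k $(True,snd p))"
    for k
  have "pairing (f' k) V = pairing (f k) (m2_mult S V)" for k V
    by (simp add: pairing_expand f'_def m2_mult_component algebra_simps)
  then have E': "V = (\<Sum>k\<in>UNIV. pairing (f' k) V *s m2_mult Si (N k))" for V
    using arg_cong[OF E[of "m2_mult S V"], of "m2_mult Si"]
    by (simp add: m2_mult_sum_smult m2_mult_assoc[symmetric] SiS)
  have "m2_mult (m2_diag e) (m2_mult Si (N k)) = \<mu> k *s m2_mult Si (N k)" for k
    by (simp add: diag m2_mult_assoc SSi' eigen m2_mult_smult_right)
  moreover have "m2_mult (m2_mult Si (m2_mult Q S)) (m2_mult Si (N k)) - \<kappa> k *s m2_mult Si (N k)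
      = \<rho> k *s m2_mult Si R" for k
    using arg_cong[OF rank_one[of k], of "m2_mult Si"]
    by (simp add: m2_mult_assoc SSi' m2_mult_diff_right m2_mult_smult_right)
  ultimately obtain s t where "m2_mult Si (m2_mult Q S) = s *s m2_one + t *s m2_diag e"
    using diagonal_mod_rank_one_in_span_diag[OF E' _ _ e] by blast
  then have "m2_mult S (m2_mult (m2_mult Si (m2_mult Q S)) Si)
      = s *s m2_one + t *s m2_mult S (m2_mult (m2_mult Si (m2_mult P S)) Si)"
    by (simp add: diag m2_mult_add_left m2_mult_add_right m2_mult_smult_left m2_mult_smult_right SSi)
  then show ?thesis by (auto simp: conj)
qed

section \<open>No bilinear algorithm with six products\<close>

lemma pencil_absorbs_one_extra_product:
  fixes a b c :: "idx2 \<Rightarrow> mat2" and \<rho> :: "mat2 \<Rightarrow> complex"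
  assumes U0: "\<And>V. m2_mult U0 V = (\<Sum>k\<in>UNIV. (pairing (a k) U0 * pairing (b k) V) *s c k)"
    and U1: "\<And>V. m2_mult U1 V = (\<Sum>k\<in>UNIV. (pairing (a k) U1 * pairing (b k) V) *s c k)"
    and M: "\<And>V. m2_mult M V = \<rho> V *s R + (\<Sum>k\<in>UNIV. (pairing (a k) M * pairing (b k) V) *s c k)"
    and invertible: "m2_det U0 \<noteq> 0" and independent: "\<And>t. U1 \<noteq> t *s U0"
  shows "\<exists>s t. M = s *s U0 + t *s U1"
proof -
  define Ui where "Ui = m2_inv U0"
  have UiU0: "m2_mult Ui (m2_mult U0 X) = X" and U0Ui: "m2_mult U0 (m2_mult Ui X) = X" for X
    using invertible by (simp_all add: Ui_def m2_mult_assoc[symmetric] m2_inv_mult m2_mult_inv)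
  define N where "N k = m2_mult Ui (c k)" for k
  define f where "f k = pairing (a k) U0 *s b k" for k
  have E: "V = (\<Sum>k\<in>UNIV. pairing (f k) V *s N k)" for V
    using arg_cong[OF U0[of V], of "m2_mult Ui"]
    by (simp add: UiU0 m2_mult_sum_smult f_def N_def pairing_smult_left)
  have biorth: "pairing (f k) (N k') = (if k = k' then 1 else 0)" for k k'
    by (rule expansion_biorthogonal[OF E])
  have a0: "pairing (a k) U0 \<noteq> 0" for k
    using biorth[of k k] by (auto simp: f_def pairing_smult_left)
  have b_dual: "pairing (b k) (N k') = (if k = k' then 1 / pairing (a k) U0 else 0)" for k k'
    using biorth[of k k'] a0[of k] by (auto simp: f_def pairing_smult_left field_simps)
  have coord: "(\<Sum>k\<in>UNIV. (x k * pairing (b k) (N k')) *s N k) = (x k' / pairing (a k') U0) *s N k'"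
    for x k'
  proof -
    have "(\<Sum>k\<in>UNIV. (x k * pairing (b k) (N k')) *s N k)
        = (\<Sum>k\<in>UNIV. (if k = k' then x k' / pairing (a k') U0 else 0) *s N k)"
      by (intro sum.cong) (auto simp: b_dual)
    then show ?thesis by (simp add: sum_delta_smult)
  qed
  have eigen: "m2_mult (m2_mult Ui U1) (N k) = (pairing (a k) U1 / pairing (a k) U0) *s N k" for k
    using arg_cong[OF U1[of "N k"], of "m2_mult Ui"]
    by (simp add: m2_mult_assoc m2_mult_sum_smult coord N_def[symmetric])
  have rank_one: "m2_mult (m2_mult Ui M) (N k) - (pairing (a k) M / pairing (a k) U0) *s N k
      = \<rho> (N k) *s m2_mult Ui R" for k
    using arg_cong[OF M[of "N k"], of "m2_mult Ui"]
    by (simp add: m2_mult_assoc m2_mult_add_right m2_mult_smult_right m2_mult_sum_smult coord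
        N_def[symmetric])
  have nonzero: "N k \<noteq> 0" for k using biorth[of k k] by auto
  have not_scalar: "m2_mult Ui U1 \<noteq> t *s m2_one" for t
  proof
    assume "m2_mult Ui U1 = t *s m2_one"
    then have "m2_mult U0 (m2_mult Ui U1) = t *s U0" by (simp add: m2_mult_smult_right)
    then show False using independent[of t] by (simp add: U0Ui)
  qed
  obtain s t where "m2_mult Ui M = s *s m2_one + t *s m2_mult Ui U1"
    using diagonal_mod_rank_one_in_span[OF E nonzero eigen rank_one not_scalar] by blast
  then have "m2_mult U0 (m2_mult Ui M) = s *s U0 + t *s U1"
    by (simp add: m2_mult_add_right m2_mult_smult_right U0Ui)
  then show ?thesis by (auto simp: U0Ui)
qed

lemma span_of_one_nonsingular_pair:
  fixes u :: "idx2 \<Rightarrow> mat2"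
  assumes one: "m2_one = (\<Sum>k\<in>UNIV. c k *s u k)"
  obtains k k' where "k \<noteq> k'"
    "m2_det (u k) \<noteq> 0 \<or> m2_det (u k') \<noteq> 0 \<or> m2_det_polar (u k) (u k') \<noteq> 0"
proof -
  have "\<exists>k k'. k \<noteq> k' \<and> (m2_det (u k) \<noteq> 0 \<or> m2_det (u k') \<noteq> 0 \<or> m2_det_polar (u k) (u k') \<noteq> 0)"
  proof (rule ccontr)
    assume "\<not> ?thesis"
    \<comment> \<open>then the polar form of the determinant vanishes on the span, which contains \<open>1\<close>\<close>
    then have singular: "m2_det (u k) = 0 \<and> m2_det_polar (u k) (u k') = 0" if "k \<noteq> k'" for k k'
      using that by blast
    have polar: "m2_det_polar (u k) (u k') = 0" for k k'
    proof (cases "k = k'")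
      case True
      have "(\<not> fst k, snd k) \<noteq> k" by (cases k) simp
      then show ?thesis using singular[of k "(\<not> fst k, snd k)"] True by (simp add: m2_det_polar_self)
    qed (use singular in blast)
    have "m2_det_polar (\<Sum>k\<in>UNIV. c k *s u k) (\<Sum>k\<in>UNIV. c k *s u k) = 0"
      by (simp add: m2_det_polar_sum_left m2_det_polar_sum_right polar)
    then show False using m2_det_polar_one by (simp add: one[symmetric])
  qed
  then show thesis using that by blast
qed

lemma dual_basis_invertible_pencil:
  fixes a u :: "idx2 \<Rightarrow> mat2"
  assumes dual: "\<And>k k'. pairing (a k) (u k') = (if k = k' then 1 else 0)"
    and expansion: "\<And>w. w = (\<Sum>k\<in>UNIV. pairing (a k) w *s u k)"
  obtains k k' U0 U1 where "k \<noteq> k'" "m2_det U0 \<noteq> 0" "\<And>t. U1 \<noteq> t *s U0"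
    "\<And>j. j \<noteq> k \<Longrightarrow> j \<noteq> k' \<Longrightarrow> pairing (a j) U0 = 0 \<and> pairing (a j) U1 = 0"
proof -
  obtain k k' where kk: "k \<noteq> k'"
    and nonsingular: "m2_det (u k) \<noteq> 0 \<or> m2_det (u k') \<noteq> 0 \<or> m2_det_polar (u k) (u k') \<noteq> 0"
    using span_of_one_nonsingular_pair[OF expansion[of m2_one]] by blast
  have vanish: "pairing (a j) (u k) = 0" "pairing (a j) (u k') = 0" if "j \<noteq> k" "j \<noteq> k'" for j
    using dual that by auto
  have not_multiple: "u j \<noteq> t *s u i" if "i \<noteq> j" for i j t
  proof
    assume "u j = t *s u i"
    then have "pairing (a j) (u j) = t * pairing (a j) (u i)" by (simp add: pairing_smult)
    then show False using dual that by simp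
  qed
  consider "m2_det (u k) \<noteq> 0" | "m2_det (u k') \<noteq> 0"
    | "m2_det (u k) = 0" "m2_det (u k') = 0" "m2_det_polar (u k) (u k') \<noteq> 0"
    using nonsingular by blast
  then show thesis
  proof cases
    case 1
    then show thesis using that[OF kk, of "u k" "u k'"] vanish not_multiple kk by blast
  next
    case 2
    then show thesis using that[OF kk, of "u k'" "u k"] vanish not_multiple kk by metis
  next
    case 3
    have "u k \<noteq> t *s (u k + u k')" for t
    proof
      assume eq: "u k = t *s (u k + u k')"
      have "pairing (a k') (u k) = t * (pairing (a k') (u k) + pairing (a k') (u k'))"
        using arg_cong[OF eq, of "pairing (a k')"] by (simp only: pairing_add pairing_smult)
      then have "t = 0" using dual kk by simp
      with eq have "pairing (a k) (u k) = 0" by simp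
      then show False using dual by simp
    qed
    moreover have "m2_det (u k + u k') \<noteq> 0" using 3 by (simp add: m2_det_add)
    ultimately show thesis
      using that[OF kk, of "u k + u k'" "u k"] vanish by (simp add: pairing_add)
  qed
qed

lemma sum_remove_two:
  assumes "finite S" "i \<in> S" "j \<in> S" "i \<noteq> j"
  shows "sum F S = F i + F j + sum F (S - {i,j})"
proof -
  have "sum F S = F i + sum F (S - {i})" using assms by (simp add: sum.remove)
  also have "sum F (S - {i}) = F j + sum F (S - {i} - {j})" using assms by (simp add: sum.remove)
  also have "S - {i} - {j} = S - {i,j}" by blast
  finally show ?thesis by (simp add: add.assoc)
qed

lemma no_bilinear_algorithm_with_six_products:
  fixes A B C :: "nat \<Rightarrow> mat2"
  assumes H: "\<And>X V. m2_mult X V = (\<Sum>l<6. (pairing (A l) X * pairing (B l) V) *s C l)"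
  shows False
proof -
  have "X = (\<Sum>l<6. pairing (A l) X *s (pairing (B l) m2_one *s C l))" for X
    using H[of X m2_one] by (simp add: vector_smult_assoc)
  from spanning_forms_dual_basis[OF this]
  obtain g :: "idx2 \<Rightarrow> nat" and u where g: "inj g" "\<And>k. g k < 6"
    and dual: "\<And>k k'. pairing (A (g k)) (u k') = (if k = k' then 1 else 0)"
    and expansion: "\<And>w. w = (\<Sum>k\<in>UNIV. pairing (A (g k)) w *s u k)"
    by blast
  obtain k k' U0 U1 where kk: "k \<noteq> k'" and U0: "m2_det U0 \<noteq> 0" and U1: "\<And>t. U1 \<noteq> t *s U0"
    and vanish: "\<And>j. j \<noteq> k \<Longrightarrow> j \<noteq> k' \<Longrightarrow> pairing (A (g j)) U0 = 0 \<and> pairing (A (g j)) U1 = 0"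
    using dual_basis_invertible_pencil[OF dual expansion] by blast
  have "card (UNIV - {k,k'}) = 2" using kk by (simp add: card_UNIV_idx2 card_Diff_subset)
  then obtain k2 k3 where k23: "UNIV - {k,k'} = {k2,k3}" "k2 \<noteq> k3"
    by (meson card_2_iff)
  have k2: "k2 \<noteq> k" "k2 \<noteq> k'" and k3: "k3 \<noteq> k" "k3 \<noteq> k'" using k23 by blast+
  define i j where "i = g k2" and "j = g k3"
  have ij: "i \<noteq> j" "i < 6" "j < 6" using g k23 by (auto simp: i_def j_def dest: injD)
  define M where "M = u k2"
  have Mi: "pairing (A i) M = 1" and Mj: "pairing (A j) M = 0"
    using dual k23(2) by (simp_all add: i_def j_def M_def)
  have pencil: "pairing (A i) U = 0 \<and> pairing (A j) U = 0" if "U = U0 \<or> U = U1" for U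
    using vanish[OF k2] vanish[OF k3] that by (auto simp: i_def j_def)
  have "card ({..<6} - {i,j}) = CARD(idx2)" using ij by (simp add: card_Diff_subset card_UNIV_idx2)
  then obtain \<sigma> :: "idx2 \<Rightarrow> nat" where \<sigma>: "bij_betw \<sigma> UNIV ({..<6} - {i,j})"
    using finite_same_card_bij[of "UNIV :: idx2 set" "{..<6} - {i,j}"] by auto
  have split: "(\<Sum>l<6. F l) = F i + F j + (\<Sum>k\<in>UNIV. F (\<sigma> k))" for F :: "nat \<Rightarrow> mat2"
    using sum_remove_two[of "{..<6}" i j F] ij by (simp add: sum.reindex_bij_betw[OF \<sigma>])
  have four: "m2_mult U V
      = (\<Sum>k\<in>UNIV. (pairing (A (\<sigma> k)) U * pairing (B (\<sigma> k)) V) *s C (\<sigma> k))"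
    if "U = U0 \<or> U = U1" for U V
    using H[of U V] pencil[OF that] by (simp add: split)
  have five: "m2_mult M V = (pairing (A i) M * pairing (B i) V) *s C i
      + (\<Sum>k\<in>UNIV. (pairing (A (\<sigma> k)) M * pairing (B (\<sigma> k)) V) *s C (\<sigma> k))" for V
    using H[of M V] Mj by (simp add: split)
  obtain s t where "M = s *s U0 + t *s U1"
    using pencil_absorbs_one_extra_product[OF four[OF disjI1[OF refl]] four[OF disjI2[OF refl]] five U0 U1]
    by blast
  then have "pairing (A i) M = 0" using pencil by (simp add: pairing_add pairing_smult)
  then show False using Mi by simp
qed

section \<open>The tensor \<open>Phi3\<close> and 2\<times>2 matrix multiplication\<close>

lemma m2_mult_of_Phi3_decomposition:
  fixes a b c :: "nat \<Rightarrow> idx2 \<Rightarrow> complex"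
  assumes D: "Phi3 = (\<lambda>i j k. \<Sum>l<n. a l i * b l j * c l k)"
  shows "m2_mult X V
    = (\<Sum>l<n. (pairing (\<chi> p. a l (snd p, fst p)) X * pairing (\<chi> p. b l p) V) *s (\<chi> p. c l p))"
proof -
  define Xt where "Xt i = X $ (snd i, fst i)" for i :: idx2
  have contract: "m2_mult X V $ k = (\<Sum>i\<in>UNIV. \<Sum>j\<in>UNIV. Xt i * V $ j * Phi3 i j k)" for k
  proof -
    obtain c1 c2 where k: "k = (c1,c2)" by fastforce
    show ?thesis unfolding k
      by (cases c1; cases c2) (simp_all add: m2_mult_component sum_UNIV_idx2 Xt_def Phi3_def Phi_def)
  qed
  have "(\<Sum>i\<in>UNIV. \<Sum>j\<in>UNIV. Xt i * V $ j * Phi3 i j k)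
      = (\<Sum>l<n. (\<Sum>i\<in>UNIV. a l i * Xt i) * (\<Sum>j\<in>UNIV. b l j * V $ j) * c l k)" for k
  proof -
    have "(\<Sum>i\<in>UNIV. \<Sum>j\<in>UNIV. Xt i * V $ j * Phi3 i j k)
        = (\<Sum>l<n. \<Sum>i\<in>UNIV. \<Sum>j\<in>UNIV. Xt i * V $ j * (a l i * b l j * c l k))"
      by (simp add: D sum_distrib_left sum.swap[of _ "{..<n}"])
    also have "\<dots> = (\<Sum>l<n. (\<Sum>i\<in>UNIV. a l i * Xt i) * (\<Sum>j\<in>UNIV. b l j * V $ j) * c l k)"
      unfolding sum_product sum_distrib_right by (simp add: sum_distrib_left mult_ac)
    finally show ?thesis .
  qed
  moreover have "pairing (\<chi> p. a l (snd p, fst p)) X = (\<Sum>i\<in>UNIV. a l i * Xt i)" for l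
    by (simp add: pairing_expand sum_UNIV_idx2 Xt_def)
  ultimately show ?thesis
    by (simp add: vec_eq_iff contract sum_component pairing_def)
qed

text \<open>Strassen's algorithm, read off as a decomposition of \<open>Phi3\<close>; the 4-tuples list the matrix
  entries (1,1), (1,2), (2,1), (2,2), and the first factors are transposed because \<open>Phi3\<close> pairs
  with the transpose of \<open>X\<close>.\<close>

definition mat_of_tuple :: "complex \<times> complex \<times> complex \<times> complex \<Rightarrow> idx2 \<Rightarrow> complex" where
  "mat_of_tuple t p = (case t of (w,x,y,z) \<Rightarrow>
     if fst p then (if snd p then z else y) else (if snd p then x else w))"

definition strassen_A :: "nat \<Rightarrow> idx2 \<Rightarrow> complex" where
  "strassen_A l p = mat_of_tuple ([(1,0,0,1),(0,0,1,1),(1,0,0,0),(0,0,0,1),(1,1,0,0),(-1,0,1,0),(0,1,0,-1)] ! l)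
     (snd p, fst p)"

definition strassen_B :: "nat \<Rightarrow> idx2 \<Rightarrow> complex" where
  "strassen_B l p = mat_of_tuple ([(1,0,0,1),(1,0,0,0),(0,1,0,-1),(-1,0,1,0),(0,0,0,1),(1,1,0,0),(0,0,1,1)] ! l) p"

definition strassen_C :: "nat \<Rightarrow> idx2 \<Rightarrow> complex" where
  "strassen_C l p = mat_of_tuple ([(1,0,0,1),(0,0,1,-1),(0,1,0,1),(1,0,1,0),(-1,1,0,0),(0,0,0,1),(1,0,0,0)] ! l) p"

lemma Phi3_strassen_decomposition:
  "Phi3 = (\<lambda>i j k. \<Sum>l<7. strassen_A l i * strassen_B l j * strassen_C l k)"
proof (intro ext)
  fix i j k :: idx2
  obtain a1 a2 b1 b2 c1 c2 where "i = (a1,a2)" "j = (b1,b2)" "k = (c1,c2)" by (metis prod.exhaust)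
  then show "Phi3 i j k = (\<Sum>l<7. strassen_A l i * strassen_B l j * strassen_C l k)"
    by (cases a1; cases a2; cases b1; cases b2; cases c1; cases c2)
       (simp_all add: Phi3_def Phi_def strassen_A_def strassen_B_def strassen_C_def mat_of_tuple_def
        numeral_eq_Suc)
qed

lemma decomposition_pad:
  fixes a :: "nat \<Rightarrow> 'a \<Rightarrow> complex" and b :: "nat \<Rightarrow> 'b \<Rightarrow> complex" and c :: "nat \<Rightarrow> 'c \<Rightarrow> complex"
  assumes "r \<le> n"
  shows "(\<lambda>i j k. \<Sum>l<r. a l i * b l j * c l k)
    = (\<lambda>i j k. \<Sum>l<n. (if l < r then a l i else 0) * b l j * c l k)"
proof (intro ext)
  fix i j k
  have "(\<Sum>l<n. (if l < r then a l i else 0) * b l j * c l k)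
      = (\<Sum>l<n. if l \<in> {..<r} then a l i * b l j * c l k else 0)"
    by (intro sum.cong) auto
  also have "\<dots> = (\<Sum>l\<in>{..<n} \<inter> {..<r}. a l i * b l j * c l k)"
    by (simp only: sum.inter_restrict[OF finite_lessThan])
  also have "{..<n} \<inter> {..<r} = {..<r}" using assms by auto
  finally show "(\<Sum>l<r. a l i * b l j * c l k) = (\<Sum>l<n. (if l < r then a l i else 0) * b l j * c l k)" ..
qed

theorem lemma1:
  shows "tensor_rank Phi3 = 7"
  unfolding tensor_rank_def
proof (rule Least_equality)
  show "\<exists>(a :: nat \<Rightarrow> idx2 \<Rightarrow> complex) (b :: nat \<Rightarrow> idx2 \<Rightarrow> complex) (c :: nat \<Rightarrow> idx2 \<Rightarrow> complex).
          Phi3 = (\<lambda>i j k. \<Sum>l<7. a l i * b l j * c l k)"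
    using Phi3_strassen_decomposition by blast
next
  fix r
  assume "\<exists>(a :: nat \<Rightarrow> idx2 \<Rightarrow> complex) (b :: nat \<Rightarrow> idx2 \<Rightarrow> complex) (c :: nat \<Rightarrow> idx2 \<Rightarrow> complex).
          Phi3 = (\<lambda>i j k. \<Sum>l<r. a l i * b l j * c l k)"
  then obtain a b c :: "nat \<Rightarrow> idx2 \<Rightarrow> complex" where D: "Phi3 = (\<lambda>i j k. \<Sum>l<r. a l i * b l j * c l k)"
    by blast
  show "7 \<le> r"
  proof (rule ccontr)
    assume "\<not> 7 \<le> r"
    then have "Phi3 = (\<lambda>i j k. \<Sum>l<6. (if l < r then a l i else 0) * b l j * c l k)"
      using D decomposition_pad[of r 6 a b c] by simp
    then show False
      by (rule no_bilinear_algorithm_with_six_products[OF m2_mult_of_Phi3_decomposition])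
  qed
qed

end
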